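(* The system $\dot b_k=\frac{a_k^{(1)}}{1+\alpha b_{k+1}}-\frac{a_{k-1}^{(1)}}{1+\alpha b_{k-1}}$, $\dot a_k^{(j)}=a_k^{(j)}\Big(\frac{b_{k+j}}{1+\alpha b_{k+j}}-\frac{b_k}{1+\alpha b_k}\Big)+\Big(\frac{a_k^{(j+1)}}{1+\alpha b_{k+j+1}}-\frac{a_{k-1}^{(j+1)}}{1+\alpha b_{k-1}}\Big)$ ($1\le j\le m-1$), $\dot a_k^{(m)}=a_k^{(m)}\Big(\frac{b_{k+m}}{1+\alpha b_{k+m}}-\frac{b_k}{1+\alpha b_k}\Big)$ (subscripts modulo $N$) is Hamiltonian with respect to the quadratic bracket $\{\cdot,\cdot\}_2$ on $\mathbb R^{(m+1)N}(b,a^{(1)},\dots,a^{(m)})$ given below, with Hamilton function $H=\alpha^{-1}\sum_{k=1}^N\log(1+\alpha b_k)$.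
   Context: $N\ge2m+2$, $m\ge1$, $\alpha\neq0$ real; subscripts modulo $N$. Convention: $a_k^{(0)}=b_k$, $a_k^{(i)}=0$ for $i<0$ or $i>m$. The bracket $\{\cdot,\cdot\}_2$ has the following nonzero brackets between coordinates (up to antisymmetry), for $1\le i,j\le m$: $\{b_k,b_{k+1}\}_2=-a_k^{(1)}$; $\{b_k,a_{k+1}^{(j)}\}_2=-a_k^{(j+1)}$, $\{a_k^{(j)},b_{k+j+1}\}_2=-a_k^{(j+1)}$; $\{b_k,a_k^{(j)}\}_2=-b_ka_k^{(j)}$, $\{a_k^{(j)},b_{k+j}\}_2=-a_k^{(j)}b_{k+j}$; $\{a_k^{(i)},a_{k+i+1}^{(j)}\}_2=-a_k^{(i+j+1)}$; for $i<j$: $\{a_k^{(i)},a_k^{(j)}\}_2=-a_k^{(i)}a_k^{(j)}$, $\{a_k^{(j)},a_{k+j-i}^{(i)}\}_2=-a_k^{(j)}a_{k+j-i}^{(i)}$; for $i\le j$, $1\le\ell\le i$: $\{a_k^{(i)},a_{k+\ell}^{(j)}\}_2=-a_k^{(i)}a_{k+\ell}^{(j)}-a_k^{(j+\ell)}a_{k+\ell}^{(i-\ell)}$; for $i\le j$, $j-i+1\le\ell\le j$: $\{a_k^{(j)},a_{k+\ell}^{(i)}\}_2=-a_k^{(j)}a_{k+\ell}^{(i)}-a_k^{(i+\ell)}a_{k+\ell}^{(j-\ell)}$. Hamiltonian system: $\dot x=\{H,x\}$ for each coordinate $x$. *)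

theory Defs
  imports "HOL-Analysis.Analysis"
begin

text \<open>A phase point is x :: nat => nat => real, where x 0 k = b_k and x i k = a_k^(i)
  for 1 <= i <= m, 0 <= k < N.  Coordinate access with subscripts modulo N and the
  convention a^(i) = 0 for i > m:\<close>

definition A :: "nat \<Rightarrow> nat \<Rightarrow> (nat \<Rightarrow> nat \<Rightarrow> real) \<Rightarrow> nat \<Rightarrow> int \<Rightarrow> real" where
  "A m N x i k = (if i \<le> m then x i (nat (k mod int N)) else 0)"

text \<open>Basic bracket rule {a_k^(i), a_(k+d)^(j)}_2 (with a^(0) = b), as listed in the paper
  (the b-rules are exactly the instances with i = 0 or j = 0).  None = no rule listed.\<close>

definition rule :: "nat \<Rightarrow> nat \<Rightarrow> (nat \<Rightarrow> nat \<Rightarrow> real) \<Rightarrow> nat \<Rightarrow> nat \<Rightarrow> nat \<Rightarrow> int \<Rightarrow> real option" where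
  "rule m N x i j d k =
    (if i \<le> m \<and> j \<le> m then
       (if d = i + 1 then Some (- A m N x (i + j + 1) k)
        else if d = 0 \<and> i < j then Some (- A m N x i k * A m N x j k)
        else if j < i \<and> d = i - j then Some (- A m N x i k * A m N x j (k + int d))
        else if i \<le> j \<and> 1 \<le> d \<and> d \<le> i then
          Some (- A m N x i k * A m N x j (k + int d) - A m N x (j + d) k * A m N x (i - d) (k + int d))
        else if j \<le> i \<and> i - j + 1 \<le> d \<and> d \<le> i then
          Some (- A m N x i k * A m N x j (k + int d) - A m N x (j + d) k * A m N x (i - d) (k + int d))
        else None)
     else None)"

definition br2 :: "nat \<Rightarrow> nat \<Rightarrow> (nat \<Rightarrow> nat \<Rightarrow> real) \<Rightarrow> nat \<Rightarrow> int \<Rightarrow> nat \<Rightarrow> int \<Rightarrow> real" where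
  "br2 m N x i k j l =
    (case rule m N x i j (nat ((l - k) mod int N)) k of
       Some v \<Rightarrow> v
     | None \<Rightarrow> (case rule m N x j i (nat ((k - l) mod int N)) l of
                  Some v \<Rightarrow> - v
                | None \<Rightarrow> 0))"

definition Ham :: "nat \<Rightarrow> real \<Rightarrow> (nat \<Rightarrow> nat \<Rightarrow> real) \<Rightarrow> real" where
  "Ham N \<alpha> x = (1 / \<alpha>) * (\<Sum>k<N. ln (1 + \<alpha> * x 0 k))"

definition dHam :: "nat \<Rightarrow> real \<Rightarrow> (nat \<Rightarrow> nat \<Rightarrow> real) \<Rightarrow> nat \<Rightarrow> nat \<Rightarrow> real" where
  "dHam N \<alpha> x j l = deriv (\<lambda>t. Ham N \<alpha> (x(j := (x j)(l := t)))) (x j l)"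

definition vf :: "nat \<Rightarrow> nat \<Rightarrow> real \<Rightarrow> (nat \<Rightarrow> nat \<Rightarrow> real) \<Rightarrow> nat \<Rightarrow> int \<Rightarrow> real" where
  "vf m N \<alpha> x i k =
    (let b = A m N x 0; a = A m N x in
     if i = 0 then
       a 1 k / (1 + \<alpha> * b (k + 1)) - a 1 (k - 1) / (1 + \<alpha> * b (k - 1))
     else if i \<le> m - 1 then
       a i k * (b (k + int i) / (1 + \<alpha> * b (k + int i)) - b k / (1 + \<alpha> * b k))
       + (a (i + 1) k / (1 + \<alpha> * b (k + int i + 1)) - a (i + 1) (k - 1) / (1 + \<alpha> * b (k - 1)))
     else
       a m k * (b (k + int m) / (1 + \<alpha> * b (k + int m)) - b k / (1 + \<alpha> * b k)))"

end

theory Submission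
  imports Defs
begin

text \<open>The Hamiltonian H depends on b alone, with partial derivative 1 / (1 + \<alpha> b_l) in b_l,
  so the Hamiltonian vector field is the sum over l of {b_l, a_k^(i)}_2 / (1 + \<alpha> b_l).
  Writing l = k - 1 + s, the bracket {b_l, a_k^(i)}_2 vanishes except for s = 0, 1, i + 1, i + 2,
  offsets which N \<ge> 2m + 2 keeps distinct modulo N; the four surviving terms are the right-hand
  side of the system, written uniformly in i with a^(0) = b and a^(m+1) = 0.\<close>

lemma nat_mod_of_bounded:
  assumes "- int N < e" "e < int N"
  shows "nat (e mod int N) = (if 0 \<le> e then nat e else nat (e + int N))"
proof (cases "0 \<le> e")
  case True
  then show ?thesis using assms by simp
next
  case False
  have "e mod int N = (e + int N) mod int N" by simp
  also have "\<dots> = e + int N" using False assms by (intro mod_pos_pos_trivial) auto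
  finally show ?thesis using False by simp
qed

lemma sum_lessThan_periodic_shift:
  fixes f :: "int \<Rightarrow> 'a::comm_monoid_add"
  assumes periodic: "\<And>t. f (t + int N) = f t"
  shows "(\<Sum>s<N. f (c + int s)) = (\<Sum>s<N. f (int s))"
proof -
  have step: "(\<Sum>s<N. f (c + 1 + int s)) = (\<Sum>s<N. f (c + int s))" for c
  proof (cases N)
    case (Suc n)
    have "(\<Sum>s<N. f (c + int s)) = f c + (\<Sum>s<n. f (c + 1 + int s))"
      unfolding Suc sum.lessThan_Suc_shift by (simp add: add.assoc)
    moreover have "(\<Sum>s<N. f (c + 1 + int s)) = (\<Sum>s<n. f (c + 1 + int s)) + f (c + int N)"
      unfolding Suc sum.lessThan_Suc by (simp add: add.assoc)
    ultimately show ?thesis using periodic by (simp add: add.commute)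
  qed simp
  show ?thesis
  proof (induction c rule: int_induct[where k = 0])
    case (step1 c)
    then show ?case using step[of c] by simp
  next
    case (step2 c)
    then show ?case using step[of "c - 1"] by simp
  qed simp
qed

lemma A_shift_period: "A m N x i (t + int N) = A m N x i t"
  by (simp add: A_def)

lemma br2_shift_period: "br2 m N x i (t + int N) j l = br2 m N x i t j l"
proof -
  have "A m N x i (t + int N + c) = A m N x i (t + c)" for i c
    using A_shift_period[of m N x i "t + c"] by (simp add: algebra_simps)
  then have "rule m N x i j d (t + int N) = rule m N x i j d t" for i j d
    by (simp add: rule_def A_shift_period)
  moreover have "(l - (t + int N)) mod int N = (l - t) mod int N"
    by (metis diff_diff_eq minus_mod_self2)
  moreover have "(t + int N - l) mod int N = (t - l) mod int N"
    by (metis add.commute add_diff_eq mod_add_self1)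
  ultimately show ?thesis unfolding br2_def by (simp only:)
qed

lemma br2_b_a_offset:
  assumes "2 * m + 2 \<le> N" "i \<le> m" "s < N"
  shows "br2 m N x 0 (k - 1 + int s) i k =
      (if s = 0 then - A m N x (i + 1) (k - 1) else 0)
    + (if s = 1 then - A m N x 0 k * A m N x i k else 0)
    + (if s = i + 1 then A m N x i k * A m N x 0 (k + int i) else 0)
    + (if s = i + 2 then A m N x (i + 1) k else 0)"
proof -
  have "- int N < 1 - int s" "1 - int s < int N" "- int N < int s - 1" "int s - 1 < int N"
    using assms by auto
  then have offsets:
    "nat ((k - (k - 1 + int s)) mod int N) = (if s \<le> 1 then 1 - s else N + 1 - s)"
    "nat ((k - 1 + int s - k) mod int N) = (if 1 \<le> s then s - 1 else N - 1)"
    by (auto simp: nat_mod_of_bounded nat_diff_distrib)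
  \<comment> \<open>for i = 0 the cases s = 1 and s = i + 1 coincide and the two terms cancel\<close>
  consider "s = 0" | "s = 1" | "s = i + 1" | "s = i + 2" | "s \<notin> {0, 1, i + 1, i + 2}"
    by blast
  then show ?thesis
    using assms unfolding br2_def offsets by cases (auto simp: rule_def)
qed

lemma sum_br2_b_weighted:
  fixes f :: "int \<Rightarrow> real"
  assumes "1 \<le> m" "2 * m + 2 \<le> N" "i \<le> m"
    and periodic: "\<And>t. f (t + int N) = f t"
  shows "(\<Sum>l<N. f (int l) * br2 m N x 0 (int l) i k) =
      - f (k - 1) * A m N x (i + 1) (k - 1)
    - f k * A m N x 0 k * A m N x i k
    + f (k + int i) * A m N x i k * A m N x 0 (k + int i)
    + f (k + int i + 1) * A m N x (i + 1) k"
proof -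
  let ?g = "\<lambda>t. f t * br2 m N x 0 t i k"
  have "(\<Sum>l<N. ?g (int l)) = (\<Sum>s<N. ?g (k - 1 + int s))"
    by (rule sum_lessThan_periodic_shift[symmetric]) (simp add: periodic br2_shift_period)
  also have "\<dots> = (\<Sum>s<N.
        (if s = 0 then - f (k - 1) * A m N x (i + 1) (k - 1) else 0)
      + (if s = 1 then - f k * A m N x 0 k * A m N x i k else 0)
      + (if s = i + 1 then f (k + int i) * A m N x i k * A m N x 0 (k + int i) else 0)
      + (if s = i + 2 then f (k + int i + 1) * A m N x (i + 1) k else 0))"
  proof (rule sum.cong)
    fix s assume "s \<in> {..<N}"
    then show "?g (k - 1 + int s) =
        (if s = 0 then - f (k - 1) * A m N x (i + 1) (k - 1) else 0)
      + (if s = 1 then - f k * A m N x 0 k * A m N x i k else 0)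
      + (if s = i + 1 then f (k + int i) * A m N x i k * A m N x 0 (k + int i) else 0)
      + (if s = i + 2 then f (k + int i + 1) * A m N x (i + 1) k else 0)"
      using br2_b_a_offset[OF assms(2,3), of s x k] by (auto simp: algebra_simps)
  qed simp
  also have "\<dots> = - f (k - 1) * A m N x (i + 1) (k - 1)
    - f k * A m N x 0 k * A m N x i k
    + f (k + int i) * A m N x i k * A m N x 0 (k + int i)
    + f (k + int i + 1) * A m N x (i + 1) k"
    using assms(1-3) by (simp add: sum.distrib)
  finally show ?thesis .
qed

lemma dHam_b:
  assumes "l < N" "\<alpha> \<noteq> 0" "1 + \<alpha> * x 0 l > 0"
  shows "dHam N \<alpha> x 0 l = 1 / (1 + \<alpha> * x 0 l)"
proof -
  define C where "C = (\<Sum>k\<in>{..<N} - {l}. ln (1 + \<alpha> * x 0 k))"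
  have "Ham N \<alpha> (x(0 := (x 0)(l := t))) = (ln (1 + \<alpha> * t) + C) / \<alpha>" for t
    unfolding Ham_def C_def using assms(1)
    by (subst sum.remove[of _ l]) (auto intro!: sum.cong)
  moreover have "((\<lambda>t. (ln (1 + \<alpha> * t) + C) / \<alpha>) has_real_derivative
      (\<alpha> / (1 + \<alpha> * x 0 l) + 0) / \<alpha>) (at (x 0 l))"
    using assms(3) by (auto intro!: derivative_eq_intros)
  ultimately show ?thesis
    unfolding dHam_def using assms(2) by (simp add: DERIV_imp_deriv)
qed

lemma dHam_a_eq_0:
  assumes "j \<noteq> 0"
  shows "dHam N \<alpha> x j l = 0"
  using assms unfolding dHam_def Ham_def by simp

lemma vf_uniform:
  assumes "i \<le> m"
  shows "vf m N \<alpha> x i k =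
      - A m N x (i + 1) (k - 1) / (1 + \<alpha> * A m N x 0 (k - 1))
    - A m N x 0 k * A m N x i k / (1 + \<alpha> * A m N x 0 k)
    + A m N x i k * A m N x 0 (k + int i) / (1 + \<alpha> * A m N x 0 (k + int i))
    + A m N x (i + 1) k / (1 + \<alpha> * A m N x 0 (k + int i + 1))"
proof -
  consider "i = 0" | "1 \<le> i" "i < m" | "i = m" "1 \<le> i"
    using assms by linarith
  then show ?thesis
  proof cases
    case 3
    then have "A m N x (i + 1) t = 0" for t by (simp add: A_def)
    with 3 show ?thesis by (simp add: vf_def Let_def algebra_simps)
  qed (auto simp: vf_def Let_def algebra_simps add_divide_distrib diff_divide_distrib)
qed

theorem mainTheorem11:
  fixes m N :: nat and \<alpha> :: real and x :: "nat \<Rightarrow> nat \<Rightarrow> real"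
  assumes "m \<ge> 1" and "N \<ge> 2 * m + 2" and "\<alpha> \<noteq> 0"
    and "\<forall>k<N. 1 + \<alpha> * x 0 k > 0"
  shows "\<forall>i\<le>m. \<forall>k<N.
           vf m N \<alpha> x i (int k)
             = (\<Sum>j\<le>m. \<Sum>l<N. dHam N \<alpha> x j l * br2 m N x j (int l) i (int k))"
proof (intro allI impI)
  fix i k assume "i \<le> m" "k < N"
  define w where "w t = 1 / (1 + \<alpha> * A m N x 0 t)" for t
  have "(\<Sum>j\<le>m. \<Sum>l<N. dHam N \<alpha> x j l * br2 m N x j (int l) i (int k))
      = (\<Sum>l<N. dHam N \<alpha> x 0 l * br2 m N x 0 (int l) i (int k))"
    by (simp add: sum.atMost_shift dHam_a_eq_0)
  also have "\<dots> = (\<Sum>l<N. w (int l) * br2 m N x 0 (int l) i (int k))"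
    using assms(3,4) by (intro sum.cong) (auto simp: w_def A_def dHam_b)
  also have "\<dots> = vf m N \<alpha> x i (int k)"
    using assms(1,2) \<open>i \<le> m\<close>
    by (subst sum_br2_b_weighted) (auto simp: w_def A_shift_period vf_uniform)
  finally show "vf m N \<alpha> x i (int k) = (\<Sum>j\<le>m. \<Sum>l<N. dHam N \<alpha> x j l * br2 m N x j (int l) i (int k))"
    by (rule sym)
qed

end
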